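(* Let $H$ be a multigraph with even order $p \geq 4$. Suppose $d \geq 2$, and that except for one vertex $s$ for which $\deg(s) \leq d$, each vertex of $H$ has degree $d$ or $d+1$, with at most $d$ vertices having degree $d+1$, and at least one vertex other than $s$ having degree $d$. Suppose that $\mathrm{ex}(H-s, d) < p/4$, and that $H - s$ is $d$-slack-dominant. Then: if $\deg(s) > 0$, then $H$ has a perfect matching; and if $\deg(s) = 0$, then there is a vertex $v$ of $H$ with degree $d$ such that $H - s - v$ has a perfect matching.
   Context: Multigraphs may have parallel edges; $n(K)$ and $e(K)$ denote the order and size of a multigraph $K$, and subgraphs on a vertex set are taken to be induced subgraphs. For an integer $k$ and a nontrivial (more than one vertex) odd-order multigraph $K$, the $k$-excess of $K$ is $\mathrm{ex}(K,k) = e(K) - \lfloor k(n(K)-1)/2 \rfloor$ and the $k$-slack of $K$ is $\mathrm{sl}(K,k) = (k+1)\lfloor (n(K)-1)/2 \rfloor - e(K)$. In the setting where all vertices of $H$ have degree $d$ or $d+1$ except possibly one vertex $s$ with $\deg(s) \le d$, $H - s$ is called $d$-slack dominant if $\mathrm{sl}(H-s, d) < \mathrm{sl}(R, d)$ for every odd-order, nontrivial proper induced subgraph $R$ of $H - s$ whose coboundary (the set of edges of $H$ with exactly one end in $R$) has cardinality at most $d$. *)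

theory Defs
  imports Main
begin

text \<open>A finite loopless multigraph on vertex set V, given by an edge-multiplicity
function m: m u v is the number of parallel edges between u and v.\<close>
definition multigraph :: "'a set \<Rightarrow> ('a \<Rightarrow> 'a \<Rightarrow> nat) \<Rightarrow> bool" where
  "multigraph V m \<longleftrightarrow> finite V \<and> (\<forall>u v. m u v = m v u) \<and> (\<forall>u. m u u = 0)
     \<and> (\<forall>u v. m u v \<noteq> 0 \<longrightarrow> u \<in> V \<and> v \<in> V)"

definition deg :: "'a set \<Rightarrow> ('a \<Rightarrow> 'a \<Rightarrow> nat) \<Rightarrow> 'a \<Rightarrow> nat" where
  "deg V m v = (\<Sum>u\<in>V. m v u)"

definition esize :: "('a \<Rightarrow> 'a \<Rightarrow> nat) \<Rightarrow> 'a set \<Rightarrow> nat" where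
  "esize m S = (\<Sum>u\<in>S. \<Sum>v\<in>S. m u v) div 2"

definition cobound :: "'a set \<Rightarrow> ('a \<Rightarrow> 'a \<Rightarrow> nat) \<Rightarrow> 'a set \<Rightarrow> nat" where
  "cobound V m S = (\<Sum>u\<in>S. \<Sum>v\<in>V - S. m u v)"

definition excess :: "('a \<Rightarrow> 'a \<Rightarrow> nat) \<Rightarrow> 'a set \<Rightarrow> int \<Rightarrow> int" where
  "excess m S k = int (esize m S) - (k * (int (card S) - 1)) div 2"

definition slack :: "('a \<Rightarrow> 'a \<Rightarrow> nat) \<Rightarrow> 'a set \<Rightarrow> int \<Rightarrow> int" where
  "slack m S k = (k + 1) * ((int (card S) - 1) div 2) - int (esize m S)"

definition slack_dominant :: "'a set \<Rightarrow> ('a \<Rightarrow> 'a \<Rightarrow> nat) \<Rightarrow> 'a \<Rightarrow> nat \<Rightarrow> bool" where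
  "slack_dominant V m s d \<longleftrightarrow>
     (\<forall>R. R \<subset> V - {s} \<and> odd (card R) \<and> card R > 1 \<and> cobound V m R \<le> d
        \<longrightarrow> slack m (V - {s}) (int d) < slack m R (int d))"

definition has_perfect_matching :: "('a \<Rightarrow> 'a \<Rightarrow> nat) \<Rightarrow> 'a set \<Rightarrow> bool" where
  "has_perfect_matching m W \<longleftrightarrow>
     (\<exists>M. (\<forall>e\<in>M. \<exists>u v. e = {u, v} \<and> u \<noteq> v \<and> u \<in> W \<and> v \<in> W \<and> m u v > 0)
        \<and> (\<forall>e\<in>M. \<forall>e'\<in>M. e \<noteq> e' \<longrightarrow> e \<inter> e' = {})
        \<and> \<Union>M = W)"

end

theory Submission
  imports Defs
begin

text \<open>By Tutte's theorem, which follows from Hall's theorem, it suffices to exclude a barrier: a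
  set \<open>S\<close> whose removal leaves at least \<open>card S + 2\<close> odd pieces. Every edge leaving a piece
  ends in \<open>S\<close>, so the pieces have total coboundary at most \<open>d * card S + card (S \<inter> high)\<close>.
  A piece avoiding \<open>s\<close> has coboundary at least \<open>d\<close>, and more unless it is a singleton of
  degree \<open>d\<close>, except when it is deficient (odd, not a singleton, coboundary at most \<open>d\<close>).
  Slack dominance applies to deficient pieces and, with the excess bound, shows that each of
  them contains more than half of the vertices; so there is at most one, and counting leaves
  no room for the barrier. If \<open>s\<close> is isolated, join it to all vertices of degree \<open>d\<close>: a
  perfect matching of the new graph matches \<open>s\<close> to such a vertex, while a barrier of it would
  consist of pieces of high-degree vertices only, which the same counting excludes.\<close>

definition Hall_condition :: "'i set \<Rightarrow> ('i \<Rightarrow> 'a set) \<Rightarrow> bool" where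
  "Hall_condition I A \<longleftrightarrow> (\<forall>K\<subseteq>I. card K \<le> card (\<Union>(A ` K)))"

lemma Hall_condition_remove:
  assumes hall: "Hall_condition I A" and fin: "finite I" "\<forall>i\<in>I. finite (A i)"
    and surplus: "\<And>K. K \<subseteq> I \<Longrightarrow> K \<noteq> {} \<Longrightarrow> K \<noteq> I \<Longrightarrow> card K < card (\<Union>(A ` K))"
    and i: "i \<in> I"
  shows "Hall_condition (I - {i}) (\<lambda>j. A j - {x})"
  unfolding Hall_condition_def
proof (intro allI impI)
  fix K assume K: "K \<subseteq> I - {i}"
  show "card K \<le> card (\<Union>j\<in>K. A j - {x})"
  proof (cases "K = {}")
    case False
    then have "card K < card (\<Union>(A ` K))" using surplus K i by blast
    then have "card K \<le> card (\<Union>(A ` K)) - 1" by linarith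
    also have "\<dots> \<le> card (\<Union>(A ` K) - {x})"
      using diff_card_le_card_Diff[of "{x}" "\<Union>(A ` K)"] by simp
    also have "\<Union>(A ` K) - {x} = (\<Union>j\<in>K. A j - {x})" by blast
    finally show ?thesis .
  qed simp
qed

lemma Hall_condition_tight:
  assumes hall: "Hall_condition I A" and fin: "finite I" "\<forall>i\<in>I. finite (A i)"
    and K: "K \<subseteq> I" "card (\<Union>(A ` K)) = card K"
  shows "Hall_condition K A" "Hall_condition (I - K) (\<lambda>j. A j - \<Union>(A ` K))"
proof -
  show "Hall_condition K A" using hall K(1) unfolding Hall_condition_def by blast
  have fK: "finite K" using K(1) fin(1) by (rule finite_subset)
  then have fUK: "finite (\<Union>(A ` K))" using K(1) fin(2) by blast
  show "Hall_condition (I - K) (\<lambda>j. A j - \<Union>(A ` K))"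
    unfolding Hall_condition_def
  proof (intro allI impI)
    fix L assume L: "L \<subseteq> I - K"
    have "card (L \<union> K) = card L + card K"
      using L fK finite_subset[OF L] fin by (subst card_Un_disjoint) auto
    then have "card L + card K \<le> card (\<Union>(A ` (L \<union> K)))"
      using hall L K(1) unfolding Hall_condition_def by (metis Diff_subset le_supI subset_trans)
    moreover have "(\<Union>j\<in>L. A j - \<Union>(A ` K)) = \<Union>(A ` (L \<union> K)) - \<Union>(A ` K)" by blast
    moreover have "card (\<Union>(A ` (L \<union> K)) - \<Union>(A ` K)) = card (\<Union>(A ` (L \<union> K))) - card (\<Union>(A ` K))"
      by (rule card_Diff_subset) (use fUK in auto)
    ultimately show "card L \<le> card (\<Union>j\<in>L. A j - \<Union>(A ` K))" using K(2) by simp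
  qed
qed

lemma inj_on_glue:
  assumes "inj_on f K" "inj_on g (I - K)" "f ` K \<inter> g ` (I - K) = {}" "K \<subseteq> I"
  shows "inj_on (\<lambda>j. if j \<in> K then f j else g j) I"
proof -
  let ?h = "\<lambda>j. if j \<in> K then f j else g j"
  have "inj_on ?h K" "inj_on ?h (I - K)"
    using assms(1,2) inj_on_cong[of K ?h f] inj_on_cong[of "I - K" ?h g] by simp_all
  moreover have "?h ` K \<inter> ?h ` (I - K) = {}" using assms(3) by auto
  moreover have "K - (I - K) = K" "I - K - K = I - K" "K \<union> (I - K) = I" using assms(4) by blast+
  ultimately show ?thesis using inj_on_Un[of ?h K "I - K"] by simp
qed

text \<open>Either every proper subfamily has a surplus, so any choice for one index can be made, or
  some proper subfamily is tight and the problem splits.\<close>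
theorem Hall_marriage:
  assumes "finite I" "\<forall>i\<in>I. finite (A i)" "Hall_condition I A"
  shows "\<exists>f. inj_on f I \<and> (\<forall>i\<in>I. f i \<in> A i)"
  using assms
proof (induction "card I" arbitrary: I A rule: less_induct)
  case less
  note fin = less.prems(1,2) and hall = less.prems(3)
  show ?case
  proof (cases "\<exists>K. K \<subseteq> I \<and> K \<noteq> {} \<and> K \<noteq> I \<and> card (\<Union>(A ` K)) \<le> card K")
    case False
    show ?thesis
    proof (cases "I = {}")
      case nonempty: False
      then obtain i where i: "i \<in> I" by blast
      have "card {i} \<le> card (\<Union>(A ` {i}))" using hall i unfolding Hall_condition_def by blast
      then obtain x where x: "x \<in> A i" by fastforce
      have "\<exists>f. inj_on f (I - {i}) \<and> (\<forall>j\<in>I - {i}. f j \<in> A j - {x})"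
        using False fin i by (intro less.hyps card_Diff1_less Hall_condition_remove[OF hall])
          (auto simp: not_le)
      then obtain f where "inj_on f (I - {i})" "\<forall>j\<in>I - {i}. f j \<in> A j - {x}" by blast
      then show ?thesis using x i by (intro exI[of _ "f(i := x)"]) (auto simp: inj_on_def)
    qed simp
  next
    case True
    then obtain K where K: "K \<subseteq> I" "K \<noteq> {}" "K \<noteq> I" "card (\<Union>(A ` K)) \<le> card K" by blast
    have tight: "card (\<Union>(A ` K)) = card K" using K(1,4) hall unfolding Hall_condition_def
      by (simp add: le_antisym)
    note split = Hall_condition_tight[OF hall fin K(1) tight]
    have cK: "card K < card I" using K fin(1) by (meson psubsetI psubset_card_mono)
    have cIK: "card (I - K) < card I"
      using card_Diff_subset[OF finite_subset[OF K(1) fin(1)] K(1)] card_mono[OF fin(1) K(1)] K(2)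
        card_gt_0_iff[of K] finite_subset[OF K(1) fin(1)] by linarith
    obtain f1 where f1: "inj_on f1 K" "\<forall>j\<in>K. f1 j \<in> A j"
      using less.hyps[OF cK _ _ split(1)] K(1) fin finite_subset by blast
    obtain f2 where f2: "inj_on f2 (I - K)" "\<forall>j\<in>I - K. f2 j \<in> A j - \<Union>(A ` K)"
      using less.hyps[OF cIK _ _ split(2)] fin by blast
    have "f1 ` K \<inter> f2 ` (I - K) = {}" using f1(2) f2(2) by fastforce
    then show ?thesis using inj_on_glue[OF f1(1) f2(1) _ K(1)] f1(2) f2(2)
      by (intro exI[of _ "\<lambda>j. if j \<in> K then f1 j else f2 j"]) auto
  qed
qed

definition perfect_matching_map :: "('a \<Rightarrow> 'a \<Rightarrow> nat) \<Rightarrow> 'a set \<Rightarrow> ('a \<Rightarrow> 'a) \<Rightarrow> bool" where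
  "perfect_matching_map m W \<mu> \<longleftrightarrow> (\<forall>x\<in>W. \<mu> x \<in> W \<and> \<mu> x \<noteq> x \<and> \<mu> (\<mu> x) = x \<and> 0 < m x (\<mu> x))"

lemma has_perfect_matching_if_map:
  assumes "perfect_matching_map m W \<mu>"
  shows "has_perfect_matching m W"
  unfolding has_perfect_matching_def
proof (intro exI[of _ "{{x, \<mu> x} | x. x \<in> W}"] conjI ballI impI)
  have \<mu>: "\<mu> x \<in> W" "\<mu> x \<noteq> x" "\<mu> (\<mu> x) = x" "0 < m x (\<mu> x)" if "x \<in> W" for x
    using assms that unfolding perfect_matching_map_def by auto
  let ?M = "{{x, \<mu> x} | x. x \<in> W}"
  show "\<Union>?M = W" using \<mu>(1) by blast
  fix e assume "e \<in> ?M"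
  then obtain x where x: "x \<in> W" "e = {x, \<mu> x}" by blast
  then show "\<exists>u v. e = {u, v} \<and> u \<noteq> v \<and> u \<in> W \<and> v \<in> W \<and> 0 < m u v"
    using \<mu>[OF x(1)] by (intro exI[of _ x] exI[of _ "\<mu> x"]) simp
  fix e' assume "e' \<in> ?M" "e \<noteq> e'"
  then obtain y where y: "y \<in> W" "e' = {y, \<mu> y}" by blast
  show "e \<inter> e' = {}"
  proof (rule ccontr)
    assume "e \<inter> e' \<noteq> {}"
    then have "x = y \<or> x = \<mu> y \<or> \<mu> x = y \<or> \<mu> x = \<mu> y" using x(2) y(2) by blast
    then have "x = y \<or> (x = \<mu> y \<and> y = \<mu> x)" using \<mu>(3)[OF x(1)] \<mu>(3)[OF y(1)] by metis
    then have "e = e'" using x(2) y(2) by auto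
    with \<open>e \<noteq> e'\<close> show False ..
  qed
qed

definition isolated_in :: "('a \<Rightarrow> 'a \<Rightarrow> nat) \<Rightarrow> 'a set \<Rightarrow> 'a set \<Rightarrow> bool" where
  "isolated_in m X C \<longleftrightarrow> (\<forall>u\<in>C. \<forall>v\<in>X - C. m u v = 0)"

text \<open>The members of \<open>P\<close> are odd unions of components of \<open>W - S\<close>; Tutte's counting only
  needs this weaker notion.\<close>
definition odd_barrier :: "('a \<Rightarrow> 'a \<Rightarrow> nat) \<Rightarrow> 'a set \<Rightarrow> 'a set \<Rightarrow> 'a set set \<Rightarrow> bool" where
  "odd_barrier m W S P \<longleftrightarrow> S \<subseteq> W
     \<and> (\<forall>C\<in>P. C \<subseteq> W - S \<and> odd (card C) \<and> isolated_in m (W - S) C)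
     \<and> (\<forall>C\<in>P. \<forall>C'\<in>P. C \<noteq> C' \<longrightarrow> C \<inter> C' = {})"

lemma odd_barrierD:
  assumes "odd_barrier m W S P"
  shows "S \<subseteq> W" "C \<in> P \<Longrightarrow> C \<subseteq> W - S" "C \<in> P \<Longrightarrow> odd (card C)"
    "C \<in> P \<Longrightarrow> isolated_in m (W - S) C" "\<forall>C\<in>P. \<forall>C'\<in>P. C \<noteq> C' \<longrightarrow> C \<inter> C' = {}"
  using assms unfolding odd_barrier_def by auto

lemma isolated_in_mono: "isolated_in m X C \<Longrightarrow> Y \<subseteq> X \<Longrightarrow> isolated_in m Y C"
  unfolding isolated_in_def by blast

lemma odd_barrier_finite:
  assumes "finite W" "odd_barrier m W S P"
  shows "finite P" "C \<in> P \<Longrightarrow> finite C"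
proof -
  have "P \<subseteq> Pow W" using assms(2) unfolding odd_barrier_def by blast
  then show "finite P" using assms(1) by (meson finite_Pow_iff finite_subset)
  show "C \<in> P \<Longrightarrow> finite C" using assms unfolding odd_barrier_def by (meson Diff_subset finite_subset)
qed

lemma odd_barrier_nonempty: "odd_barrier m W S P \<Longrightarrow> C \<in> P \<Longrightarrow> C \<noteq> {}"
  unfolding odd_barrier_def by fastforce

lemma even_card_Union_plus_card_odd_barrier:
  assumes "finite W" "odd_barrier m W S P"
  shows "even (card (\<Union>P) + card P)"
proof -
  have "card (\<Union>P) = (\<Sum>C\<in>P. card C)"
    by (rule card_Union_disjoint)
      (use assms odd_barrier_finite[OF assms] in \<open>auto simp: odd_barrier_def pairwise_def disjnt_def\<close>)
  moreover have "even (\<Sum>C\<in>P. card C + 1)"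
    by (rule dvd_sum) (use assms(2) in \<open>auto simp: odd_barrier_def\<close>)
  moreover have "(\<Sum>C\<in>P. card C + 1) = (\<Sum>C\<in>P. card C) + card P"
    by (subst sum.distrib) simp
  ultimately show ?thesis by simp
qed

text \<open>Whatever of \<open>W\<close> is covered neither by \<open>S'\<close> nor by the odd sets is isolated as well,
  so it may join the family when its size is odd.\<close>
lemma odd_barrier_insert_rest:
  assumes sym: "\<And>u v. m u v = m v u" and b: "odd_barrier m W S P"
    and S': "S \<subseteq> S'" "S' \<subseteq> W - \<Union>P" and odd: "odd (card (W - S' - \<Union>P))"
  shows "odd_barrier m W S' (insert (W - S' - \<Union>P) P)" "W - S' - \<Union>P \<notin> P"
proof -
  let ?R = "W - S' - \<Union>P"
  have P: "C \<subseteq> W - S" "odd (card C)" "isolated_in m (W - S) C" if "C \<in> P" for C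
    using b that unfolding odd_barrier_def by auto
  have R: "isolated_in m (W - S') ?R"
    unfolding isolated_in_def
  proof (intro ballI)
    fix u v assume u: "u \<in> ?R" and v: "v \<in> W - S' - ?R"
    then obtain C where "C \<in> P" "v \<in> C" by blast
    then have "m v u = 0" using P u S'(1) unfolding isolated_in_def by blast
    then show "m u v = 0" by (simp add: sym)
  qed
  show "odd_barrier m W S' (insert ?R P)"
    unfolding odd_barrier_def
  proof (intro conjI ballI impI)
    show "S' \<subseteq> W" using S'(2) by blast
    fix C assume C: "C \<in> insert ?R P"
    show "C \<subseteq> W - S'" using C P(1) S'(2) by blast
    show "odd (card C)" using C P(2) odd by blast
    show "isolated_in m (W - S') C" using C R isolated_in_mono[OF P(3)] S'(1) by blast
    fix C' assume "C' \<in> insert ?R P" "C \<noteq> C'"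
    then show "C \<inter> C' = {}" using C b unfolding odd_barrier_def by blast
  qed
  have "?R \<noteq> {}" using odd by fastforce
  then show "?R \<notin> P" by blast
qed

lemma card_odd_barrier_split:
  assumes "finite W" "odd_barrier m W S P"
  shows "card W = card S + card (\<Union>P) + card (W - S - \<Union>P)"
proof -
  have S: "S \<subseteq> W" and U: "\<Union>P \<subseteq> W - S" using assms(2) unfolding odd_barrier_def by auto
  have "card W = card S + card (W - S)"
    using card_Diff_subset[OF finite_subset[OF S assms(1)] S] card_mono[OF assms(1) S] by simp
  moreover have "card (W - S) = card (\<Union>P) + card (W - S - \<Union>P)"
    using card_Diff_subset[OF finite_subset[OF U] U] card_mono[OF _ U] assms(1) by simp
  ultimately show ?thesis by simp
qed

lemma odd_barrier_parity:
  assumes sym: "\<And>u v. m u v = m v u" and fin: "finite W" and ev: "even (card W)"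
    and b: "odd_barrier m W S P" and lt: "card S < card P"
  shows "\<exists>P'. odd_barrier m W S P' \<and> card S + 2 \<le> card P'"
proof (cases "even (card (W - S - \<Union>P))")
  case True
  then have "even (card S + card P)"
    using card_odd_barrier_split[OF fin b] even_card_Union_plus_card_odd_barrier[OF fin b] ev
    by presburger
  then have "card S + 2 \<le> card P" using lt by presburger
  then show ?thesis using b by blast
next
  case False
  have "S \<subseteq> W - \<Union>P" using b unfolding odd_barrier_def by blast
  note rest = odd_barrier_insert_rest[OF sym b order_refl this False]
  have "card (insert (W - S - \<Union>P) P) = card P + 1"
    using rest(2) odd_barrier_finite(1)[OF fin b] by simp
  moreover have "even (card S + card (insert (W - S - \<Union>P) P))"
    using card_odd_barrier_split[OF fin b] even_card_Union_plus_card_odd_barrier[OF fin b] ev False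
      calculation by presburger
  ultimately show ?thesis using rest(1) lt by (intro exI[of _ "insert (W - S - \<Union>P) P"]) presburger
qed

lemma disjoint_replace_member:
  assumes P: "\<forall>D\<in>P. \<forall>D'\<in>P. D \<noteq> D' \<longrightarrow> D \<inter> D' = {}"
    and Q: "\<forall>D\<in>Q. \<forall>D'\<in>Q. D \<noteq> D' \<longrightarrow> D \<inter> D' = {}"
    and QC: "\<forall>D\<in>Q. D \<subseteq> C" and C: "C \<in> P"
    and D: "D \<in> P - {C} \<union> Q" "D' \<in> P - {C} \<union> Q" "D \<noteq> D'"
  shows "D \<inter> D' = {}"
proof -
  have mixed: "D1 \<inter> D2 = {}" if "D1 \<in> P - {C}" "D2 \<in> Q" for D1 D2
    using that P QC C by blast
  consider "D \<in> P" "D' \<in> P" | "D \<in> Q" "D' \<in> Q" | "D \<in> P - {C}" "D' \<in> Q"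
    | "D' \<in> P - {C}" "D \<in> Q"
    using D(1,2) by blast
  then show ?thesis
  proof cases
    case 1
    then show ?thesis using P D(3) by blast
  next
    case 2
    then show ?thesis using Q D(3) by blast
  next
    case 3
    then show ?thesis using mixed by blast
  next
    case 4
    then show ?thesis using mixed by blast
  qed
qed

lemma odd_barrier_refine:
  assumes b: "odd_barrier m W S P" and C: "C \<in> P" "v \<in> C" and bC: "odd_barrier m (C - {v}) T Q"
  shows "odd_barrier m W (S \<union> insert v T) (P - {C} \<union> Q)"
proof -
  have P: "D \<subseteq> W - S" "odd (card D)" "isolated_in m (W - S) D" if "D \<in> P" for D
    using b that unfolding odd_barrier_def by auto
  have Q: "D \<subseteq> C - {v} - T" "odd (card D)" "isolated_in m (C - {v} - T) D" if "D \<in> Q" for D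
    using bC that unfolding odd_barrier_def by auto
  have T: "T \<subseteq> C - {v}" using bC unfolding odd_barrier_def by blast
  have disjC: "D \<inter> C = {}" if "D \<in> P - {C}" for D using b C(1) that unfolding odd_barrier_def by blast
  let ?S = "S \<union> insert v T"
  have isoQ: "isolated_in m (W - ?S) D" if D: "D \<in> Q" for D
    unfolding isolated_in_def
  proof (intro ballI)
    fix x w assume x: "x \<in> D" and w: "w \<in> W - ?S - D"
    show "m x w = 0"
    proof (cases "w \<in> C")
      case True
      then show ?thesis using Q(3)[OF D] x w unfolding isolated_in_def by blast
    next
      case False
      then show ?thesis using P(3)[OF C(1)] Q(1)[OF D] x w unfolding isolated_in_def by blast
    qed
  qed
  show ?thesis
    unfolding odd_barrier_def
  proof (intro conjI ballI impI)
    show "?S \<subseteq> W" using b P(1)[OF C(1)] T C(2) unfolding odd_barrier_def by blast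
    fix D assume D: "D \<in> P - {C} \<union> Q"
    show "D \<subseteq> W - ?S"
    proof (cases "D \<in> Q")
      case True
      then show ?thesis using Q(1) P(1)[OF C(1)] by blast
    next
      case False
      then show ?thesis using D P(1) disjC T C(2) by blast
    qed
    show "odd (card D)" using D P(2) Q(2) by blast
    show "isolated_in m (W - ?S) D" using D isoQ isolated_in_mono[OF P(3)] by blast
    fix D' assume D': "D' \<in> P - {C} \<union> Q" "D \<noteq> D'"
    have "\<forall>D\<in>Q. D \<subseteq> C" using Q(1) by blast
    then show "D \<inter> D' = {}"
      by (rule disjoint_replace_member[OF odd_barrierD(5)[OF b] odd_barrierD(5)[OF bC] _ C(1) D D'])
  qed
qed

lemma card_odd_barrier_refine:
  assumes fin: "finite W" and b: "odd_barrier m W S P" and C: "C \<in> P" "v \<in> C"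
    and bC: "odd_barrier m (C - {v}) T Q"
  shows "card (S \<union> insert v T) = card S + card T + 1" "card (P - {C} \<union> Q) + 1 = card P + card Q"
proof -
  have CS: "C \<subseteq> W - S" and fC: "finite C" using b C odd_barrier_finite[OF fin b]
    unfolding odd_barrier_def by auto
  have T: "T \<subseteq> C - {v}" using bC unfolding odd_barrier_def by blast
  have fS: "finite S" using b fin unfolding odd_barrier_def by (meson finite_subset)
  have "finite T" using T fC finite_subset by blast
  moreover have "S \<inter> insert v T = {}" "v \<notin> T" using CS T C(2) by auto
  ultimately show "card (S \<union> insert v T) = card S + card T + 1" using fS by (simp add: card_Un_disjoint)
  have "D \<subseteq> C" "D \<noteq> {}" if "D \<in> Q" for D
    using that bC odd_barrier_nonempty[OF bC] unfolding odd_barrier_def by auto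
  moreover have "D \<inter> C = {}" if "D \<in> P - {C}" for D using b C(1) that unfolding odd_barrier_def by blast
  ultimately have "(P - {C}) \<inter> Q = {}" by blast
  moreover have "finite P" "finite Q" using odd_barrier_finite(1)[OF fin b] odd_barrier_finite(1)[OF _ bC] fC
    by auto
  moreover have "card P > 0" using C(1) calculation(2) card_gt_0_iff by blast
  ultimately show "card (P - {C} \<union> Q) + 1 = card P + card Q"
    using C(1) by (simp add: card_Un_disjoint)
qed

lemma odd_barrier_neighbours:
  assumes b: "odd_barrier m W S P" and K: "K \<subseteq> P"
  shows "odd_barrier m W {x \<in> S. \<exists>u\<in>\<Union>K. 0 < m u x} K"
  unfolding odd_barrier_def
proof (intro conjI ballI impI)
  let ?N = "{x \<in> S. \<exists>u\<in>\<Union>K. 0 < m u x}"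
  have P: "C \<subseteq> W - S" "odd (card C)" "isolated_in m (W - S) C" if "C \<in> P" for C
    using b that unfolding odd_barrier_def by auto
  show "?N \<subseteq> W" using b unfolding odd_barrier_def by blast
  fix C assume C: "C \<in> K"
  show "C \<subseteq> W - ?N" "odd (card C)" using C K P(1,2) by blast+
  show "isolated_in m (W - ?N) C"
    unfolding isolated_in_def
  proof (intro ballI)
    fix x w assume x: "x \<in> C" and w: "w \<in> W - ?N - C"
    show "m x w = 0"
    proof (cases "w \<in> S")
      case True
      then show ?thesis using x w C by auto
    next
      case False
      then show ?thesis using P(3) C K x w unfolding isolated_in_def by blast
    qed
  qed
  fix C' assume "C' \<in> K" "C \<noteq> C'"
  then show "C \<inter> C' = {}" using C K b unfolding odd_barrier_def by blast
qed

lemma disjoint_family_index: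
  assumes "\<And>C C'. C \<in> P \<Longrightarrow> C' \<in> P \<Longrightarrow> C \<noteq> C' \<Longrightarrow> C \<inter> C' = {}"
  shows "\<exists>part. \<forall>C\<in>P. \<forall>x\<in>C. part x = C"
proof -
  have "(SOME C. C \<in> P \<and> x \<in> C) = C" if "C \<in> P" "x \<in> C" for C x
    using someI[of "\<lambda>C. C \<in> P \<and> x \<in> C" C] assms that by blast
  then show ?thesis by (intro exI[of _ "\<lambda>x. SOME C. C \<in> P \<and> x \<in> C"]) blast
qed

lemma perfect_matching_map_glue:
  assumes sym: "\<And>u v. m u v = m v u"
    and W: "W = S \<union> \<Union>P" and disj: "S \<inter> \<Union>P = {}"
    and Pdisj: "\<And>C C'. C \<in> P \<Longrightarrow> C' \<in> P \<Longrightarrow> C \<noteq> C' \<Longrightarrow> C \<inter> C' = {}"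
    and f: "bij_betw f P S"
    and u: "\<And>C. C \<in> P \<Longrightarrow> u C \<in> C \<and> 0 < m (u C) (f C)"
    and \<mu>C: "\<And>C. C \<in> P \<Longrightarrow> perfect_matching_map m (C - {u C}) (\<mu>C C)"
  shows "\<exists>\<mu>. perfect_matching_map m W \<mu>"
proof -
  obtain part where part: "\<And>C x. C \<in> P \<Longrightarrow> x \<in> C \<Longrightarrow> part x = C"
    using disjoint_family_index[of P] Pdisj by metis
  define g where "g = inv_into P f"
  have g: "g x \<in> P" "f (g x) = x" if "x \<in> S" for x
    using f that unfolding g_def bij_betw_def by (auto intro: inv_into_into f_inv_into_f)
  have gf: "g (f C) = C" if "C \<in> P" for C
    using f that unfolding g_def bij_betw_def by (simp add: inv_into_f_f)
  have fS: "f C \<in> S" if "C \<in> P" for C using f that unfolding bij_betw_def by blast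
  define \<mu> where "\<mu> x = (if x \<in> S then u (g x)
      else if x = u (part x) then f (part x) else \<mu>C (part x) x)" for x
  have "\<mu> x \<in> W \<and> \<mu> x \<noteq> x \<and> \<mu> (\<mu> x) = x \<and> 0 < m x (\<mu> x)" if x: "x \<in> W" for x
  proof (cases "x \<in> S")
    case True
    then have C: "g x \<in> P" "f (g x) = x" using g by blast+
    then have uC: "u (g x) \<in> g x" "0 < m (u (g x)) x" using u[OF C(1)] by auto
    moreover have "u (g x) \<notin> S" using uC(1) C(1) disj by blast
    moreover have "part (u (g x)) = g x" using part[OF C(1) uC(1)] .
    ultimately show ?thesis using True C uC W sym unfolding \<mu>_def by auto
  next
    case False
    then obtain C where C: "C \<in> P" "x \<in> C" using x W by blast
    then have px: "part x = C" by (rule part)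
    show ?thesis
    proof (cases "x = u C")
      case True
      then show ?thesis using False px C fS[OF C(1)] gf[OF C(1)] u[OF C(1)] W unfolding \<mu>_def by auto
    next
      case xu: False
      have y: "\<mu>C C x \<in> C - {u C}" "\<mu>C C x \<noteq> x" "\<mu>C C (\<mu>C C x) = x" "0 < m x (\<mu>C C x)"
        using \<mu>C[OF C(1)] C(2) xu unfolding perfect_matching_map_def by auto
      moreover have "\<mu>C C x \<notin> S" using y(1) disj C(1) by blast
      moreover have "part (\<mu>C C x) = C" using y(1) part[OF C(1)] by blast
      ultimately show ?thesis using False xu px C W unfolding \<mu>_def by auto
    qed
  qed
  then show ?thesis unfolding perfect_matching_map_def by blast
qed

lemma maximal_odd_barrier:
  assumes fin: "finite W" and tutte: "\<forall>S P. odd_barrier m W S P \<longrightarrow> card P \<le> card S"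
  obtains S P where "odd_barrier m W S P" "card P = card S"
    "\<And>S' P'. odd_barrier m W S' P' \<Longrightarrow> card S' \<le> card P' \<Longrightarrow> card S' \<le> card S"
proof -
  define tight where "tight S \<longleftrightarrow> (\<exists>P. odd_barrier m W S P \<and> card S \<le> card P)" for S
  have "tight {}" unfolding tight_def odd_barrier_def by (intro exI[of _ "{}"]) simp
  moreover have "card S < card W + 1" if "tight S" for S
    using that card_mono[OF fin] unfolding tight_def odd_barrier_def by (simp add: le_imp_less_Suc)
  ultimately obtain S where "tight S" and max: "\<And>S'. tight S' \<Longrightarrow> card S' \<le> card S"
    using ex_has_greatest_nat[of tight "{}" card "card W + 1"] by blast
  then obtain P where "odd_barrier m W S P" "card S \<le> card P" unfolding tight_def by blast
  moreover from this have "card P = card S" using tutte by (simp add: le_antisym)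
  ultimately show ?thesis using that max unfolding tight_def by blast
qed

lemma maximal_odd_barrier_covers:
  assumes sym: "\<And>u v. m u v = m v u" and fin: "finite W" and ev: "even (card W)"
    and b: "odd_barrier m W S P" and PS: "card P = card S"
    and max: "\<And>S' P'. odd_barrier m W S' P' \<Longrightarrow> card S' \<le> card P' \<Longrightarrow> card S' \<le> card S"
  shows "W = S \<union> \<Union>P"
proof (rule ccontr)
  assume "W \<noteq> S \<union> \<Union>P"
  moreover have SW: "S \<subseteq> W" and U: "\<Union>P \<subseteq> W - S" using b unfolding odd_barrier_def by auto
  ultimately obtain v where v: "v \<in> W - S - \<Union>P" by blast
  have "even (card (W - S - \<Union>P))"
    using card_odd_barrier_split[OF fin b] even_card_Union_plus_card_odd_barrier[OF fin b] ev PS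
    by presburger
  moreover have "W - insert v S - \<Union>P = W - S - \<Union>P - {v}" by blast
  moreover have "card (W - S - \<Union>P) > 0" using v fin by (auto simp: card_gt_0_iff)
  ultimately have odd: "odd (card (W - insert v S - \<Union>P))" using v by simp
  have "insert v S \<subseteq> W - \<Union>P" using v SW U by blast
  note rest = odd_barrier_insert_rest[OF sym b subset_insertI this odd]
  have "card (insert (W - insert v S - \<Union>P) P) = card S + 1"
    using rest(2) odd_barrier_finite(1)[OF fin b] PS by simp
  moreover have "card (insert v S) = card S + 1" using v finite_subset[OF SW fin] by simp
  ultimately have "card (insert v S) \<le> card S" by (intro max[OF rest(1)]) simp
  then show False using \<open>card (insert v S) = card S + 1\<close> by simp
qed

lemma maximal_odd_barrier_critical:
  assumes sym: "\<And>u v. m u v = m v u" and fin: "finite W"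
    and b: "odd_barrier m W S P" and PS: "card P = card S"
    and max: "\<And>S' P'. odd_barrier m W S' P' \<Longrightarrow> card S' \<le> card P' \<Longrightarrow> card S' \<le> card S"
    and C: "C \<in> P" "v \<in> C" and bC: "odd_barrier m (C - {v}) T Q"
  shows "card Q \<le> card T"
proof (rule ccontr)
  assume "\<not> card Q \<le> card T"
  moreover have fC: "finite C" using odd_barrier_finite(2)[OF fin b C(1)] .
  moreover have "even (card (C - {v}))"
    using b C fC unfolding odd_barrier_def by (simp add: card_Diff_singleton)
  ultimately obtain Q' where bC': "odd_barrier m (C - {v}) T Q'" and "card T + 2 \<le> card Q'"
    using odd_barrier_parity[OF sym _ _ bC] by (meson finite_Diff not_le)
  moreover note card_odd_barrier_refine[OF fin b C bC']
  ultimately have "card (S \<union> insert v T) \<le> card S"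
    using PS by (intro max[OF odd_barrier_refine[OF b C bC']]) auto
  then show False using card_odd_barrier_refine(1)[OF fin b C bC'] by simp
qed

lemma Hall_condition_odd_barrier:
  assumes tutte: "\<forall>S P. odd_barrier m W S P \<longrightarrow> card P \<le> card S" and b: "odd_barrier m W S P"
  shows "Hall_condition P (\<lambda>C. {x \<in> S. \<exists>u\<in>C. 0 < m u x})"
  unfolding Hall_condition_def
proof (intro allI impI)
  fix K assume "K \<subseteq> P"
  then have "card K \<le> card {x \<in> S. \<exists>u\<in>\<Union>K. 0 < m u x}"
    using tutte odd_barrier_neighbours[OF b] by blast
  also have "{x \<in> S. \<exists>u\<in>\<Union>K. 0 < m u x} = (\<Union>C\<in>K. {x \<in> S. \<exists>u\<in>C. 0 < m u x})" by blast
  finally show "card K \<le> card (\<Union>C\<in>K. {x \<in> S. \<exists>u\<in>C. 0 < m u x})" .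
qed

text \<open>Take \<open>S\<close> maximal among sets with at least \<open>card S\<close> odd sets: then these sets cover the
  rest of the graph, each becomes perfectly matchable after deleting any vertex, and Hall's
  theorem matches them to distinct neighbours in \<open>S\<close>.\<close>
theorem Tutte:
  assumes sym: "\<And>u v. m u v = m v u"
  shows "finite W \<Longrightarrow> \<forall>S P. odd_barrier m W S P \<longrightarrow> card P \<le> card S \<Longrightarrow>
    \<exists>\<mu>. perfect_matching_map m W \<mu>"
proof (induction "card W" arbitrary: W rule: less_induct)
  case less
  note fin = less.prems(1) and tutte = less.prems(2)
  have "\<not> odd_barrier m W {} {W}" using tutte by fastforce
  then have ev: "even (card W)" unfolding odd_barrier_def isolated_in_def by auto
  obtain S P where b: "odd_barrier m W S P" and PS: "card P = card S"
    and max: "\<And>S' P'. odd_barrier m W S' P' \<Longrightarrow> card S' \<le> card P' \<Longrightarrow> card S' \<le> card S"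
    using maximal_odd_barrier[OF fin tutte] by blast
  have P: "\<And>C. C \<in> P \<Longrightarrow> C \<subseteq> W - S"
    and Pdisj: "\<And>C C'. C \<in> P \<Longrightarrow> C' \<in> P \<Longrightarrow> C \<noteq> C' \<Longrightarrow> C \<inter> C' = {}"
    using b unfolding odd_barrier_def by auto
  have fP: "finite P" and fS: "finite S"
    using odd_barrier_finite[OF fin b] b fin finite_subset unfolding odd_barrier_def by auto
  have critical: "\<exists>\<mu>. perfect_matching_map m (C - {v}) \<mu>" if C: "C \<in> P" "v \<in> C" for C v
  proof (rule less.hyps)
    have "card C \<le> card W" using card_mono[OF fin] P[OF C(1)] by blast
    then show "card (C - {v}) < card W"
      using card_Diff1_less[OF odd_barrier_finite(2)[OF fin b C(1)] C(2)] by linarith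
  qed (use maximal_odd_barrier_critical[OF sym fin b PS max C] odd_barrier_finite(2)[OF fin b C(1)]
      in auto)
  obtain f where f: "inj_on f P" "\<And>C. C \<in> P \<Longrightarrow> f C \<in> S \<and> (\<exists>u\<in>C. 0 < m u (f C))"
    using Hall_marriage[OF fP _ Hall_condition_odd_barrier[OF tutte b]] fS by auto
  then have "f ` P \<subseteq> S" by blast
  then have bij: "bij_betw f P S"
    using card_subset_eq[OF fS] card_image[OF f(1)] PS f(1) unfolding bij_betw_def by simp
  have "\<forall>C\<in>P. \<exists>x. x \<in> C \<and> 0 < m x (f C)" using f(2) by blast
  then obtain u where u: "\<forall>C\<in>P. u C \<in> C \<and> 0 < m (u C) (f C)" by (rule bchoice[THEN exE])
  have "\<forall>C\<in>P. \<exists>\<mu>. perfect_matching_map m (C - {u C}) \<mu>" using critical u by blast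
  then obtain \<mu>C where \<mu>C: "\<forall>C\<in>P. perfect_matching_map m (C - {u C}) (\<mu>C C)" by (rule bchoice[THEN exE])
  have covered: "W = S \<union> \<Union>P" by (rule maximal_odd_barrier_covers[OF sym fin ev b PS max])
  have "S \<inter> \<Union>P = {}" using P by blast
  then show ?case
    by (rule perfect_matching_map_glue[OF sym covered _ Pdisj bij, where u = u and \<mu>C = \<mu>C])
      (use u \<mu>C in blast)+
qed

corollary Tutte_barrier:
  assumes "\<And>u v. m u v = m v u" "finite W" "even (card W)" "\<nexists>\<mu>. perfect_matching_map m W \<mu>"
  shows "\<exists>S P. odd_barrier m W S P \<and> card S + 2 \<le> card P"
  using Tutte[OF assms(1,2)] odd_barrier_parity[OF assms(1-3)] assms(4) by (meson not_le)

definition vol :: "'a set \<Rightarrow> ('a \<Rightarrow> 'a \<Rightarrow> nat) \<Rightarrow> 'a set \<Rightarrow> nat" where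
  "vol V m X = (\<Sum>x\<in>X. deg V m x)"

lemma even_sum_sum_symmetric:
  assumes sym: "\<And>u v. m u v = m v u" and loop: "\<And>u. m u u = 0" and "finite X"
  shows "even (\<Sum>u\<in>X. \<Sum>v\<in>X. m u v)"
  using \<open>finite X\<close>
proof (induction X rule: finite_induct)
  case (insert x F)
  have "(\<Sum>u\<in>insert x F. \<Sum>v\<in>insert x F. m u v)
      = (\<Sum>u\<in>F. \<Sum>v\<in>F. m u v) + (\<Sum>v\<in>F. m x v) + (\<Sum>u\<in>F. m u x)"
    using insert loop by (simp add: sum.distrib algebra_simps)
  also have "(\<Sum>u\<in>F. m u x) = (\<Sum>v\<in>F. m x v)" using sym by simp
  finally show ?case using insert.IH by simp
qed simp

lemma vol_eq_esize_cobound: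
  assumes H: "multigraph V m" and X: "X \<subseteq> V"
  shows "vol V m X = 2 * esize m X + cobound V m X"
proof -
  have fin: "finite V" using H unfolding multigraph_def by blast
  have "deg V m x = (\<Sum>v\<in>X. m x v) + (\<Sum>v\<in>V - X. m x v)" for x
    unfolding deg_def using sum.subset_diff[OF X fin] by (simp add: add.commute)
  then have "vol V m X = (\<Sum>u\<in>X. \<Sum>v\<in>X. m u v) + cobound V m X"
    unfolding vol_def cobound_def by (simp add: sum.distrib)
  moreover have "even (\<Sum>u\<in>X. \<Sum>v\<in>X. m u v)"
    using H finite_subset[OF X fin] by (intro even_sum_sum_symmetric) (auto simp: multigraph_def)
  ultimately show ?thesis unfolding esize_def by simp
qed

lemma cobound_complement:
  assumes "multigraph V m" "X \<subseteq> V"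
  shows "cobound V m (V - X) = cobound V m X"
proof -
  have "V - (V - X) = X" using assms(2) by blast
  then have "cobound V m (V - X) = (\<Sum>u\<in>V - X. \<Sum>v\<in>X. m u v)" unfolding cobound_def by simp
  also have "\<dots> = (\<Sum>v\<in>X. \<Sum>u\<in>V - X. m v u)"
    using assms(1) unfolding multigraph_def by (subst sum.swap) simp
  finally show ?thesis unfolding cobound_def .
qed

lemma cobound_singleton:
  assumes "multigraph V m" "v \<in> V"
  shows "cobound V m {v} = deg V m v"
proof -
  have "deg V m v = m v v + (\<Sum>w\<in>V - {v}. m v w)"
    unfolding deg_def using assms sum.remove[of V v "m v"] by (simp add: multigraph_def)
  then show ?thesis unfolding cobound_def using assms(1) by (simp add: multigraph_def)
qed

text \<open>Every edge leaving a member of the barrier family ends in \<open>S\<close>.\<close>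
lemma sum_cobound_odd_barrier_le:
  assumes H: "multigraph V m" and b: "odd_barrier m V S P"
  shows "(\<Sum>C\<in>P. cobound V m C) \<le> vol V m S"
proof -
  have fin: "finite V" and sym: "\<And>u v. m u v = m v u" using H unfolding multigraph_def by auto
  have S: "S \<subseteq> V" and P: "\<And>C. C \<in> P \<Longrightarrow> C \<subseteq> V - S \<and> isolated_in m (V - S) C"
    using b unfolding odd_barrier_def by auto
  define h where "h u = (\<Sum>v\<in>S. m u v)" for u
  have "cobound V m C = (\<Sum>u\<in>C. h u)" if C: "C \<in> P" for C
  proof -
    have "(\<Sum>v\<in>V - C. m u v) = h u" if u: "u \<in> C" for u
    proof -
      have "V - C = S \<union> (V - S - C)" "S \<inter> (V - S - C) = {}" using P[OF C] S by auto
      moreover have "(\<Sum>v\<in>V - S - C. m u v) = 0" using P[OF C] u unfolding isolated_in_def by simp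
      ultimately show ?thesis
        unfolding h_def using fin S by (simp add: sum.union_disjoint finite_subset)
    qed
    then show ?thesis unfolding cobound_def by simp
  qed
  then have "(\<Sum>C\<in>P. cobound V m C) = (\<Sum>C\<in>P. \<Sum>u\<in>C. h u)" by simp
  also have "\<dots> = (\<Sum>u\<in>\<Union>P. h u)"
    using sum.Union_disjoint[of P h] odd_barrier_finite[OF fin b] b
    by (simp add: comp_def odd_barrier_def pairwise_def disjnt_def)
  also have "\<dots> \<le> (\<Sum>u\<in>V. h u)" by (rule sum_mono2) (use fin P in auto)
  also have "\<dots> = vol V m S" unfolding h_def vol_def deg_def using sym by (subst sum.swap) simp
  finally show ?thesis .
qed

lemma sum_const_plus_indicator:
  "finite X \<Longrightarrow> (\<Sum>x\<in>X. c + (if x \<in> A then 1 else 0)) = c * card X + card (X \<inter> A)"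
  by (simp add: sum.distrib sum.If_cases Int_def mult.commute)

lemma card_le_1I: "finite A \<Longrightarrow> (\<And>a b. a \<in> A \<Longrightarrow> b \<in> A \<Longrightarrow> a \<noteq> b \<Longrightarrow> False) \<Longrightarrow> card A \<le> 1"
  using card_le_Suc0_iff_eq by (metis One_nat_def)

lemma card_le_1_nonempty_singleton:
  assumes "finite A" "card A \<le> 1" "A \<noteq> {}"
  obtains a where "A = {a}"
proof -
  have "card A = 1" using assms card_gt_0_iff[of A] by linarith
  then show ?thesis using that card_1_singletonE by blast
qed

locale slack_dominant_multigraph =
  fixes V :: "'a set" and m :: "'a \<Rightarrow> 'a \<Rightarrow> nat" and s :: 'a and d :: nat
  assumes H: "multigraph V m"
    and p_even: "even (card V)" and p_ge: "card V \<ge> 4"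
    and d_ge: "d \<ge> 2"
    and s_in: "s \<in> V" and deg_s: "deg V m s \<le> d"
    and deg_other: "\<forall>v\<in>V - {s}. deg V m v = d \<or> deg V m v = d + 1"
    and few_high: "card {v \<in> V - {s}. deg V m v = d + 1} \<le> d"
    and some_low: "\<exists>v\<in>V - {s}. deg V m v = d"
    and ex_small: "4 * excess m (V - {s}) (int d) < int (card V)"
    and dom: "slack_dominant V m s d"
begin

definition high :: "'a set" where
  "high = {v \<in> V - {s}. deg V m v = d + 1}"

lemma fin: "finite V" and sym: "m u v = m v u"
  using H unfolding multigraph_def by auto

lemma high_subset: "high \<subseteq> V - {s}" and card_high: "card high \<le> d" and finite_high: "finite high"
  using few_high fin finite_subset[of high V] unfolding high_def by auto

lemma deg_other_eq: "x \<in> V - {s} \<Longrightarrow> deg V m x = d + (if x \<in> high then 1 else 0)"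
  using deg_other unfolding high_def by auto

lemma vol_eq:
  assumes "X \<subseteq> V - {s}"
  shows "vol V m X = d * card X + card (X \<inter> high)"
proof -
  have "finite X" using assms fin finite_subset by blast
  moreover have "vol V m X = (\<Sum>x\<in>X. d + (if x \<in> high then 1 else 0))"
    unfolding vol_def using assms by (intro sum.cong refl deg_other_eq) blast
  ultimately show ?thesis by (simp add: sum_const_plus_indicator)
qed

lemma vol_le:
  assumes "X \<subseteq> V"
  shows "vol V m X \<le> d * card X + card (X \<inter> high)"
proof -
  have "finite X" using assms fin finite_subset by blast
  moreover have "vol V m X \<le> (\<Sum>x\<in>X. d + (if x \<in> high then 1 else 0))"
    unfolding vol_def using assms deg_other_eq deg_s by (intro sum_mono) (fastforce simp: high_def)
  ultimately show ?thesis by (simp add: sum_const_plus_indicator)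
qed

lemma card_V_eq: obtains q where "card V = 2 * q + 2"
proof -
  have "card V = 2 * (card V div 2 - 1) + 2" using p_even p_ge by presburger
  then show ?thesis using that by blast
qed

lemma two_esize_eq: "2 * esize m (V - {s}) + deg V m s = d * (card V - 1) + card high"
proof -
  have "vol V m (V - {s}) = 2 * esize m (V - {s}) + cobound V m (V - {s})"
    by (rule vol_eq_esize_cobound[OF H]) blast
  moreover have "cobound V m (V - {s}) = deg V m s"
    using cobound_complement[OF H, of "{s}"] cobound_singleton[OF H s_in] s_in by simp
  moreover have "vol V m (V - {s}) = d * (card V - 1) + card high"
    using vol_eq[of "V - {s}"] high_subset s_in fin by (simp add: Int_absorb1)
  ultimately show ?thesis by simp
qed

lemma excess_bound: "2 * d + 2 * card high < card V + 2 * deg V m s"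
proof -
  obtain q where q: "card V = 2 * q + 2" using card_V_eq .
  then have "excess m (V - {s}) (int d) = int (esize m (V - {s})) - int d * int q"
    using s_in fin unfolding excess_def by simp
  then have "4 * int (esize m (V - {s})) < 4 * (int d * int q) + 2 * int q + 2"
    using ex_small q by simp
  moreover have "int (2 * esize m (V - {s}) + deg V m s) = int (d * (2 * q + 1) + card high)"
    using two_esize_eq q by simp
  then have "2 * int (esize m (V - {s})) + int (deg V m s) = 2 * (int d * int q) + int d + int (card high)"
    by (simp add: algebra_simps)
  ultimately have "int (2 * d + 2 * card high) < int (card V + 2 * deg V m s)" using q by simp
  then show ?thesis by (simp only: of_nat_less_iff)
qed

definition deficient :: "'a set \<Rightarrow> bool" where
  "deficient R \<longleftrightarrow> R \<subseteq> V - {s} \<and> R \<noteq> V - {s} \<and> odd (card R) \<and> 1 < card R \<and> cobound V m R \<le> d"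

lemma deficient_slack_bound:
  assumes R: "deficient R"
  shows "card V + deg V m s + card (R \<inter> high) \<le> card R + cobound V m R + card high"
proof -
  obtain q where q: "card V = 2 * q + 2" using card_V_eq .
  obtain j where j: "card R = 2 * j + 1" using R oddE unfolding deficient_def by blast
  have RV: "R \<subseteq> V - {s}" using R unfolding deficient_def by blast
  have "slack m (V - {s}) (int d) < slack m R (int d)"
    using dom R unfolding slack_dominant_def deficient_def by blast
  moreover have "slack m (V - {s}) (int d) = int d * int q + int q - int (esize m (V - {s}))"
    using q s_in fin unfolding slack_def by (simp add: algebra_simps)
  moreover have "slack m R (int d) = int d * int j + int j - int (esize m R)"
    using j unfolding slack_def by (simp add: algebra_simps)
  moreover have "int (2 * esize m (V - {s}) + deg V m s) = int (d * (2 * q + 1) + card high)"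
    using two_esize_eq q by simp
  moreover have "int (2 * esize m R + cobound V m R) = int (d * (2 * j + 1) + card (R \<inter> high))"
  proof -
    have "R \<subseteq> V" using RV by blast
    then show ?thesis using vol_eq_esize_cobound[OF H, of R] vol_eq[OF RV] j by (simp only:)
  qed
  ultimately have "int (card V + deg V m s + card (R \<inter> high)) \<le> int (card R + cobound V m R + card high)"
    using q j by (simp add: algebra_simps)
  then show ?thesis by (simp only: of_nat_le_iff)
qed

lemma deficient_card: "deficient R \<Longrightarrow> card V < 2 * card R"
  using deficient_slack_bound[of R] excess_bound unfolding deficient_def by linarith

lemma cobound_not_deficient:
  assumes C: "C \<subseteq> V - {s}" "C \<noteq> V - {s}" "odd (card C)" and nd: "\<not> deficient C"
  shows "d + (if card C = 1 \<and> C \<inter> high = {} then 0 else 1) \<le> cobound V m C"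
proof (cases "card C = 1")
  case True
  then obtain v where "C = {v}" by (rule card_1_singletonE)
  then show ?thesis using C cobound_singleton[OF H] deg_other_eq[of v] by auto
next
  case False
  then have "1 < card C" using C(3) by (cases "card C") auto
  then show ?thesis using C nd False unfolding deficient_def by auto
qed

end

locale Tutte_obstruction = slack_dominant_multigraph +
  fixes S :: "'a set" and P :: "'a set set"
  assumes barrier: "odd_barrier m V S P" and many_parts: "card S + 2 \<le> card P"
begin

lemma S_subset: "S \<subseteq> V"
  and part_subset: "C \<in> P \<Longrightarrow> C \<subseteq> V - S"
  and odd_part: "C \<in> P \<Longrightarrow> odd (card C)"
  and part_isolated: "C \<in> P \<Longrightarrow> isolated_in m (V - S) C"
  and parts_disjoint: "C \<in> P \<Longrightarrow> C' \<in> P \<Longrightarrow> C \<noteq> C' \<Longrightarrow> C \<inter> C' = {}"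
  using barrier unfolding odd_barrier_def by auto

lemma finite_parts: "finite P" and finite_part: "C \<in> P \<Longrightarrow> finite C" and finite_S: "finite S"
  using odd_barrier_finite[OF fin barrier] finite_subset[OF S_subset fin] by auto

lemma at_most_one_deficient: "card {C \<in> P. deficient C} \<le> 1"
proof (rule card_le_1I)
  fix C C' assume "C \<in> {C \<in> P. deficient C}" "C' \<in> {C \<in> P. deficient C}" "C \<noteq> C'"
  then have "card V < 2 * card C" "card V < 2 * card C'" "card (C \<union> C') = card C + card C'"
    using deficient_card parts_disjoint finite_part by (auto simp: card_Un_disjoint)
  moreover have "card (C \<union> C') \<le> card V"
    using \<open>C \<in> _\<close> \<open>C' \<in> _\<close> part_subset fin by (intro card_mono) auto
  ultimately show False by linarith
qed (use finite_parts in simp)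

lemma at_most_one_containing_s: "card {C \<in> P. s \<in> C} \<le> 1"
  by (rule card_le_1I) (use finite_parts parts_disjoint in auto)

lemma part_eq_V_minus_s:
  assumes C: "C \<in> P" "C = V - {s}"
  shows "S = {} \<and> deg V m s = 0"
proof -
  have "\<not> card P \<le> Suc 0" using many_parts by linarith
  then obtain G where G: "G \<in> P" "G \<noteq> C"
    using C(1) unfolding card_le_Suc0_iff_eq[OF finite_parts] by blast
  then have "G = {s}" using parts_disjoint[OF G(1) C(1)] part_subset[OF G(1)] C(2)
      odd_barrier_nonempty[OF barrier G(1)] by blast
  then have "S = {}" using part_subset[OF C(1)] part_subset[OF G(1)] C(2) S_subset by blast
  moreover have "isolated_in m V {s}" using part_isolated[OF G(1)] \<open>G = {s}\<close> calculation by simp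
  moreover have "deg V m s = cobound V m {s}" using cobound_singleton[OF H s_in] by simp
  ultimately show ?thesis unfolding cobound_def isolated_in_def by simp
qed

lemma sum_cobound_le: "(\<Sum>C\<in>P. cobound V m C) \<le> d * card S + card (S \<inter> high)"
  using sum_cobound_odd_barrier_le[OF H barrier] vol_le[OF S_subset] by linarith

definition regular_parts :: "'a set set" where
  "regular_parts = {C \<in> P. s \<notin> C \<and> \<not> deficient C}"

definition low_singletons :: "'a set set" where
  "low_singletons = {C \<in> regular_parts. card C = 1 \<and> C \<inter> high = {}}"

lemma card_parts_split:
  "card P = card regular_parts + card {C \<in> P. deficient C} + card {C \<in> P. s \<in> C}"
  and sum_cobound_split: "(\<Sum>C\<in>P. cobound V m C) = (\<Sum>C\<in>regular_parts. cobound V m C)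
    + (\<Sum>C\<in>{C \<in> P. deficient C}. cobound V m C) + (\<Sum>C\<in>{C \<in> P. s \<in> C}. cobound V m C)"
proof -
  let ?D = "{C \<in> P. deficient C}" and ?E = "{C \<in> P. s \<in> C}"
  have eq: "P = regular_parts \<union> (?D \<union> ?E)" unfolding regular_parts_def by blast
  have disj: "regular_parts \<inter> (?D \<union> ?E) = {}" "?D \<inter> ?E = {}"
    unfolding regular_parts_def deficient_def by blast+
  have fin: "finite regular_parts" "finite ?D" "finite ?E"
    using finite_parts unfolding regular_parts_def by auto
  have "card P = card (regular_parts \<union> (?D \<union> ?E))" using arg_cong[OF eq, of card] .
  then show "card P = card regular_parts + card ?D + card ?E"
    using fin disj by (simp add: card_Un_disjoint)
  have "(\<Sum>C\<in>P. cobound V m C) = (\<Sum>C\<in>regular_parts \<union> (?D \<union> ?E). cobound V m C)"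
    using arg_cong[OF eq, of "sum (cobound V m)"] .
  then show "(\<Sum>C\<in>P. cobound V m C) = (\<Sum>C\<in>regular_parts. cobound V m C)
      + (\<Sum>C\<in>?D. cobound V m C) + (\<Sum>C\<in>?E. cobound V m C)"
    using fin disj by (simp add: sum.union_disjoint)
qed

lemma sum_cobound_regular_parts:
  assumes proper: "0 < deg V m s \<or> S \<noteq> {}"
  shows "d * card regular_parts + card (regular_parts - low_singletons)
    \<le> (\<Sum>C\<in>regular_parts. cobound V m C)"
proof -
  have "finite regular_parts" using finite_parts unfolding regular_parts_def by simp
  have "d * card regular_parts + card (regular_parts - low_singletons)
      = d * card regular_parts + card (regular_parts \<inter> (regular_parts - low_singletons))"
    by (simp add: Int_absorb1)
  also have "\<dots> = (\<Sum>C\<in>regular_parts. d + (if C \<in> regular_parts - low_singletons then 1 else 0))"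
    by (rule sum_const_plus_indicator[symmetric]) fact
  also have "\<dots> \<le> (\<Sum>C\<in>regular_parts. cobound V m C)"
  proof (rule sum_mono)
    fix C assume C: "C \<in> regular_parts"
    then have "C \<in> P" "s \<notin> C" "\<not> deficient C" unfolding regular_parts_def by auto
    moreover have "C \<noteq> V - {s}" using part_eq_V_minus_s[OF \<open>C \<in> P\<close>] proper by auto
    moreover have "C \<subseteq> V - {s}" using part_subset[OF \<open>C \<in> P\<close>] \<open>s \<notin> C\<close> by blast
    moreover have "(if C \<in> regular_parts - low_singletons then 1 else 0)
        = (if card C = 1 \<and> C \<inter> high = {} then 0 else (1::nat))"
      using C unfolding low_singletons_def by auto
    ultimately show "d + (if C \<in> regular_parts - low_singletons then 1 else 0) \<le> cobound V m C"
      using cobound_not_deficient[of C] odd_part by simp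
  qed
  finally show ?thesis .
qed

lemma deficient_complement:
  assumes E: "E \<in> P" "s \<in> E" "cobound V m E = 0" and pos: "0 < deg V m s" and S: "2 \<le> card S"
  shows "deficient (V - E)"
proof -
  have EV: "E \<subseteq> V" and SE: "S \<subseteq> V - E" using part_subset[OF E(1)] S_subset by auto
  have "V - E \<noteq> V - {s}"
  proof
    assume "V - E = V - {s}"
    then have "E = {s}" using EV E(2) by blast
    then show False using E(3) pos cobound_singleton[OF H s_in] by simp
  qed
  moreover have "odd (card (V - E))"
    using odd_part[OF E(1)] p_even card_Diff_subset[OF finite_part[OF E(1)] EV] card_mono[OF fin EV]
    by (simp add: even_diff_nat)
  moreover have "1 < card (V - E)" using card_mono[OF _ SE] fin S by simp
  moreover have "cobound V m (V - E) = 0" using cobound_complement[OF H EV] E(3) by simp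
  ultimately show ?thesis unfolding deficient_def using E(2) by auto
qed

lemma deficient_part_if_deg_s_pos:
  assumes pos: "0 < deg V m s"
  shows "\<exists>C\<in>P. deficient C"
proof (rule ccontr)
  assume "\<not> (\<exists>C\<in>P. deficient C)"
  then have none: "\<forall>C\<in>P. \<not> deficient C" by blast
  let ?E = "{C \<in> P. s \<in> C}"
  have no_def: "{C \<in> P. deficient C} = {}" using none by blast
  then have main: "d * card regular_parts + (\<Sum>C\<in>?E. cobound V m C) \<le> d * card S + card (S \<inter> high)"
    using sum_cobound_regular_parts sum_cobound_split sum_cobound_le pos by force
  have parts: "card S + 2 \<le> card regular_parts + card ?E"
    using card_parts_split many_parts no_def by simp
  have hS: "card (S \<inter> high) \<le> card high" "card (S \<inter> high) \<le> card S"
    using finite_high finite_S by (simp_all add: card_mono)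
  show False
  proof (cases "?E = {}")
    case True
    then have "d * (card S + 2) \<le> d * card regular_parts" using parts[unfolded True] by (intro mult_le_mono2) simp
    then show ?thesis using main[unfolded True] hS card_high d_ge by (simp add: algebra_simps)
  next
    case False
    moreover have "finite ?E" using finite_parts by simp
    ultimately obtain E where E1: "?E = {E}"
      using card_le_1_nonempty_singleton[OF _ at_most_one_containing_s] by blast
    then have E: "E \<in> P" "s \<in> E" by auto
    have "d * (card S + 1) \<le> d * card regular_parts" using parts[unfolded E1] by (intro mult_le_mono2) simp
    then have "d + cobound V m E \<le> card (S \<inter> high)" using main[unfolded E1] by (simp add: algebra_simps)
    then have cE: "cobound V m E = 0" and hSd: "card (S \<inter> high) = d" using hS card_high by linarith+
    have "2 \<le> card S" using hSd hS d_ge by linarith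
    note R = deficient_complement[OF E cE pos this]
    have "card (S \<inter> high) \<le> card ((V - E) \<inter> high)"
      using part_subset[OF E(1)] S_subset finite_high by (intro card_mono) auto
    moreover have "card (V - E) < card V"
      using part_subset[OF E(1)] E(2) s_in fin by (intro psubset_card_mono) auto
    moreover have "cobound V m (V - E) = 0"
      using cobound_complement[OF H, of E] part_subset[OF E(1)] cE by auto
    ultimately show False using deficient_slack_bound[OF R] hSd card_high by linarith
  qed
qed

text \<open>The low singletons, \<open>s\<close>, a deficient part \<open>D\<close> and the high vertices outside \<open>D\<close>
  are disjoint.\<close>
lemma card_low_singletons_le:
  assumes D: "D \<in> P" "deficient D"
  shows "card low_singletons + 1 + card D + card (high - D) \<le> card V"
proof -
  have low: "C \<in> P" "s \<notin> C" "card C = 1" "C \<inter> high = {}" "C \<noteq> D" if "C \<in> low_singletons" for C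
    using that D(2) unfolding low_singletons_def regular_parts_def by auto
  have fin_low: "finite low_singletons"
    using finite_parts unfolding low_singletons_def regular_parts_def by simp
  have "card (\<Union>low_singletons) = (\<Sum>C\<in>low_singletons. card C)"
    using fin_low low(1) finite_part parts_disjoint
    by (intro card_Union_disjoint) (auto simp: pairwise_def disjnt_def)
  then have "card (\<Union>low_singletons) = card low_singletons" using low(3) by simp
  moreover have "s \<notin> \<Union>low_singletons" using low(2) by blast
  moreover have "finite (\<Union>low_singletons)" using fin_low low(1) finite_part by blast
  ultimately have A: "card (insert s (\<Union>low_singletons)) = card low_singletons + 1" by simp
  have B: "card (D \<union> (high - D)) = card D + card (high - D)"
    by (rule card_Un_disjoint) (use finite_part[OF D(1)] finite_high in auto)
  have "s \<notin> D" using D(2) unfolding deficient_def by blast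
  then have "insert s (\<Union>low_singletons) \<inter> (D \<union> (high - D)) = {}"
    using low(1,2,4,5) parts_disjoint D(1) high_subset by blast
  then have "card (insert s (\<Union>low_singletons) \<union> (D \<union> (high - D)))
      = card (insert s (\<Union>low_singletons)) + card (D \<union> (high - D))"
    using finite_part[OF D(1)] finite_high \<open>finite (\<Union>low_singletons)\<close> by (intro card_Un_disjoint) auto
  moreover have "card (insert s (\<Union>low_singletons) \<union> (D \<union> (high - D))) \<le> card V"
    using low(1) part_subset D(1) s_in high_subset by (intro card_mono[OF fin]) blast
  ultimately show ?thesis using A B by linarith
qed

lemma not_deficient_if_deg_s_pos:
  assumes pos: "0 < deg V m s" and DP: "D \<in> P"
  shows "\<not> deficient D"
proof
  assume "deficient D"
  note D = DP this
  have "finite {C \<in> P. deficient C}" "{C \<in> P. deficient C} \<noteq> {}" using finite_parts D by auto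
  then obtain D' where "{C \<in> P. deficient C} = {D'}"
    using card_le_1_nonempty_singleton[OF _ at_most_one_deficient] by blast
  then have D1: "{C \<in> P. deficient C} = {D}" using D by blast
  have main: "d * card regular_parts + card (regular_parts - low_singletons) + cobound V m D
      \<le> d * card S + card S"
    using sum_cobound_regular_parts sum_cobound_split[unfolded D1] sum_cobound_le pos
      card_mono[OF finite_S, of "S \<inter> high"] by force
  have "card S \<le> card regular_parts"
    using card_parts_split[unfolded D1] many_parts at_most_one_containing_s by simp
  then have "d * card S + card S \<le> d * card regular_parts + card regular_parts"
    using mult_le_mono2 by (metis add_le_mono)
  moreover have "card regular_parts = card low_singletons + card (regular_parts - low_singletons)"
    using finite_parts card_Diff_subset[of low_singletons regular_parts]
      card_mono[of regular_parts low_singletons]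
    unfolding low_singletons_def regular_parts_def by (simp add: subset_iff)
  moreover have "high \<inter> D = D \<inter> high" by blast
  then have "card (high - D) = card high - card (D \<inter> high)" "card (D \<inter> high) \<le> card high"
    using card_Diff_subset_Int[of high D] card_mono[OF finite_high, of "high \<inter> D"] finite_high by auto
  ultimately show False
    using main deficient_slack_bound[OF D(2)] card_low_singletons_le[OF D] pos by linarith
qed

lemma s_notin_S_if_deg_s_zero:
  assumes zero: "deg V m s = 0"
  shows "s \<notin> S"
proof
  assume sS: "s \<in> S"
  have "S \<noteq> {}" using sS by blast
  then have "d * card regular_parts \<le> (\<Sum>C\<in>P. cobound V m C)"
    using sum_cobound_regular_parts sum_cobound_split by fastforce
  also have "\<dots> \<le> vol V m S" by (rule sum_cobound_odd_barrier_le[OF H barrier])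
  also have "\<dots> = d * (card S - 1) + card ((S - {s}) \<inter> high)"
    using vol_eq[of "S - {s}"] sum.remove[OF finite_S sS, of "deg V m"] S_subset zero finite_S sS
    unfolding vol_def by auto
  finally have "d * card regular_parts \<le> d * (card S - 1) + d"
    using card_mono[OF finite_high, of "(S - {s}) \<inter> high"] card_high by auto
  moreover have no_s: "{C \<in> P. s \<in> C} = {}" using part_subset sS by blast
  have "card S + 1 \<le> card regular_parts"
    using card_parts_split[unfolded no_s] many_parts at_most_one_deficient by simp
  then have "d * (card S + 1) \<le> d * card regular_parts" by (rule mult_le_mono2)
  ultimately show False using sS finite_S d_ge by (cases "card S") (auto simp: card_gt_0_iff)
qed

lemma part_with_low_vertex:
  shows "\<exists>C\<in>P. s \<notin> C \<and> \<not> C \<subseteq> high"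
proof (rule ccontr)
  assume "\<not> (\<exists>C\<in>P. s \<notin> C \<and> \<not> C \<subseteq> high)"
  then have high_parts: "\<forall>C\<in>P. s \<notin> C \<longrightarrow> C \<subseteq> high" by blast
  have cob: "d + 1 \<le> cobound V m C" if C: "C \<in> P" "s \<notin> C" for C
  proof -
    have Ch: "C \<subseteq> high" using high_parts C by blast
    have CV: "C \<subseteq> V - {s}" using part_subset[OF C(1)] C(2) by blast
    have "C \<noteq> {}" using odd_barrier_nonempty[OF barrier C(1)] .
    moreover have "C \<noteq> V - {s}" using some_low Ch unfolding high_def by auto
    moreover have "\<not> deficient C"
      using deficient_slack_bound[of C] excess_bound Ch card_high unfolding deficient_def
      by (auto simp: Int_absorb2)
    ultimately have "d + (if card C = 1 \<and> C \<inter> high = {} then 0 else 1) \<le> cobound V m C"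
      using cobound_not_deficient[OF CV _ odd_part[OF C(1)]] by blast
    then show ?thesis using Ch \<open>C \<noteq> {}\<close> by (simp add: Int_absorb2)
  qed
  let ?Q = "{C \<in> P. s \<notin> C}"
  have "card P = card ?Q + card {C \<in> P. s \<in> C}"
    using finite_parts by (subst card_Un_disjoint[symmetric]) (auto intro: arg_cong[where f = card])
  then have "card S + 1 \<le> card ?Q" using many_parts at_most_one_containing_s by linarith
  then have "(d + 1) * (card S + 1) \<le> (d + 1) * card ?Q" by (rule mult_le_mono2)
  also have "\<dots> \<le> (\<Sum>C\<in>?Q. cobound V m C)"
    using sum_mono[of ?Q "\<lambda>_. d + 1" "cobound V m"] cob by (simp add: mult.commute)
  also have "\<dots> \<le> (\<Sum>C\<in>P. cobound V m C)" using finite_parts by (intro sum_mono2) auto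
  also have "\<dots> \<le> d * card S + card S"
    using sum_cobound_le card_mono[OF finite_S, of "S \<inter> high"] by force
  finally show False by (simp add: algebra_simps)
qed

end

context slack_dominant_multigraph
begin

lemma Tutte_obstructionI:
  "odd_barrier m V S P \<Longrightarrow> card S + 2 \<le> card P \<Longrightarrow> Tutte_obstruction V m s d S P"
  by (simp add: Tutte_obstruction_def Tutte_obstruction_axioms_def slack_dominant_multigraph_axioms)

lemma perfect_matching_if_deg_s_pos:
  assumes pos: "0 < deg V m s"
  shows "\<exists>\<mu>. perfect_matching_map m V \<mu>"
proof (rule ccontr)
  assume "\<nexists>\<mu>. perfect_matching_map m V \<mu>"
  then obtain S P where "odd_barrier m V S P" "card S + 2 \<le> card P"
    using Tutte_barrier[of m V, OF sym fin p_even] by blast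
  then interpret Tutte_obstruction V m s d S P by (rule Tutte_obstructionI)
  show False
    using deficient_part_if_deg_s_pos not_deficient_if_deg_s_pos pos by blast
qed

text \<open>When \<open>s\<close> is isolated, join it to every vertex of degree \<open>d\<close>; a perfect matching of
  the new graph pairs \<open>s\<close> with such a vertex.\<close>
definition join_s_to_low :: "'a \<Rightarrow> 'a \<Rightarrow> nat" where
  "join_s_to_low u v =
     (if (u = s \<and> v \<in> V - {s} - high) \<or> (v = s \<and> u \<in> V - {s} - high) then 1 else m u v)"

lemma edge_at_s_eq_0: "deg V m s = 0 \<Longrightarrow> m s w = 0"
  using fin H sum_eq_0_iff[of V "m s"] unfolding deg_def multigraph_def by (cases "w \<in> V") auto

lemma isolated_in_join_s_to_low:
  assumes zero: "deg V m s = 0" and iso: "isolated_in join_s_to_low X C"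
  shows "isolated_in m X C"
proof -
  have "m u v = 0" if "join_s_to_low u v = 0" for u v
    using that sym[of s] edge_at_s_eq_0[OF zero] unfolding join_s_to_low_def by (auto split: if_splits)
  then show ?thesis using iso unfolding isolated_in_def by blast
qed

lemma perfect_matching_from_join_s_to_low:
  assumes zero: "deg V m s = 0" and \<mu>: "perfect_matching_map join_s_to_low V \<mu>"
  shows "\<mu> s \<in> V \<and> deg V m (\<mu> s) = d \<and> perfect_matching_map m (V - {s} - {\<mu> s}) \<mu>"
proof -
  have m\<mu>: "\<mu> x \<in> V" "\<mu> x \<noteq> x" "\<mu> (\<mu> x) = x" "0 < join_s_to_low x (\<mu> x)" if "x \<in> V" for x
    using \<mu> that unfolding perfect_matching_map_def by auto
  have "\<mu> s \<in> V - {s} - high"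
  proof (rule ccontr)
    assume "\<mu> s \<notin> V - {s} - high"
    then have "join_s_to_low s (\<mu> s) = m s (\<mu> s)" unfolding join_s_to_low_def by auto
    then show False using m\<mu>(4)[OF s_in] edge_at_s_eq_0[OF zero] by simp
  qed
  moreover have "\<mu> x \<in> V - {s} - {\<mu> s} \<and> \<mu> x \<noteq> x \<and> \<mu> (\<mu> x) = x \<and> 0 < m x (\<mu> x)"
    if x: "x \<in> V - {s} - {\<mu> s}" for x
  proof -
    have "\<mu> x \<noteq> s" "\<mu> x \<noteq> \<mu> s" using m\<mu>(3)[OF s_in] m\<mu>(3)[of x] x by auto
    then show ?thesis using m\<mu>[of x] x unfolding join_s_to_low_def by auto
  qed
  ultimately show ?thesis using deg_other_eq[of "\<mu> s"] unfolding perfect_matching_map_def by auto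
qed

lemma perfect_matching_if_deg_s_zero:
  assumes zero: "deg V m s = 0"
  shows "\<exists>v\<in>V. deg V m v = d \<and> (\<exists>\<mu>. perfect_matching_map m (V - {s} - {v}) \<mu>)"
proof (cases "\<exists>\<mu>. perfect_matching_map join_s_to_low V \<mu>")
  case True
  then show ?thesis using perfect_matching_from_join_s_to_low[OF zero] by blast
next
  case False
  have "join_s_to_low u v = join_s_to_low v u" for u v
    unfolding join_s_to_low_def using sym by auto
  from Tutte_barrier[of join_s_to_low V, OF this fin p_even False]
  obtain S P where b: "odd_barrier join_s_to_low V S P" and many: "card S + 2 \<le> card P"
    by blast
  have "odd_barrier m V S P"
    using b isolated_in_join_s_to_low[OF zero] unfolding odd_barrier_def by simp
  then interpret Tutte_obstruction V m s d S P using many by (rule Tutte_obstructionI)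
  have "s \<notin> S" using s_notin_S_if_deg_s_zero[OF zero] .
  have "C \<subseteq> high" if C: "C \<in> P" "s \<notin> C" for C
  proof
    fix u assume u: "u \<in> C"
    show "u \<in> high"
    proof (rule ccontr)
      assume "u \<notin> high"
      then have "join_s_to_low u s = 1" using u part_subset[OF C(1)] C(2) unfolding join_s_to_low_def by auto
      moreover have "isolated_in join_s_to_low (V - S) C" using b C(1) unfolding odd_barrier_def by blast
      ultimately show False using u C(2) \<open>s \<notin> S\<close> s_in unfolding isolated_in_def by fastforce
    qed
  qed
  then show ?thesis using part_with_low_vertex by blast
qed

end

theorem mainTheorem9:
  fixes V :: "'a set" and m :: "'a \<Rightarrow> 'a \<Rightarrow> nat" and s :: 'a and d :: nat
  assumes H: "multigraph V m"
    and p_even: "even (card V)" and p_ge: "card V \<ge> 4"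
    and d_ge: "d \<ge> 2"
    and s_in: "s \<in> V" and deg_s: "deg V m s \<le> d"
    and deg_other: "\<forall>v\<in>V - {s}. deg V m v = d \<or> deg V m v = d + 1"
    and few_high: "card {v \<in> V - {s}. deg V m v = d + 1} \<le> d"
    and some_low: "\<exists>v\<in>V - {s}. deg V m v = d"
    and ex_small: "4 * excess m (V - {s}) (int d) < int (card V)"
    and dom: "slack_dominant V m s d"
  shows "(deg V m s > 0 \<longrightarrow> has_perfect_matching m V) \<and>
         (deg V m s = 0 \<longrightarrow> (\<exists>v\<in>V. deg V m v = d \<and> has_perfect_matching m (V - {s} - {v})))"
proof -
  interpret slack_dominant_multigraph V m s d
    using assms by unfold_locales
  show ?thesis
    using perfect_matching_if_deg_s_pos perfect_matching_if_deg_s_zero has_perfect_matching_if_map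
    by blast
qed

end
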